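(* Let $\delta\in\mathbb{F}_{5^8}^*$ with $\delta\neq\pm1$ and multiplicative order of $\delta$ dividing $4$. Then $S(x)=x^5+\delta x^{5^5}\in\mathbb{F}_{5^8}[x]$ is a scattered polynomial of index $0$ over $\mathbb{F}_{5^8}$ (with $q=5$).
   Context: An $\mathbb{F}_q$-linearized polynomial $S\in\mathbb{F}_{q^n}[x]$ is a scattered polynomial of index $t$ over $\mathbb{F}_{q^n}$ if for all $y,z\in\mathbb{F}_{q^n}^*$, $\frac{S(y)}{y^{q^t}}=\frac{S(z)}{z^{q^t}}$ implies $y/z\in\mathbb{F}_q$. *)

theory Defs
  imports "HOL-Computational_Algebra.Polynomial"
begin

definition subfield_Fq :: "nat \<Rightarrow> 'a::field set" where
  "subfield_Fq q = {a. a ^ q = a}"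

definition linearized :: "nat \<Rightarrow> 'a::field poly \<Rightarrow> bool" where
  "linearized q S \<longleftrightarrow> (\<forall>k. coeff S k \<noteq> 0 \<longrightarrow> (\<exists>i. k = q ^ i))"

definition scattered :: "nat \<Rightarrow> nat \<Rightarrow> 'a::field poly \<Rightarrow> bool" where
  "scattered q t S \<longleftrightarrow> linearized q S \<and>
     (\<forall>y z. y \<noteq> 0 \<longrightarrow> z \<noteq> 0 \<longrightarrow>
        poly S y / y ^ (q ^ t) = poly S z / z ^ (q ^ t) \<longrightarrow> y / z \<in> subfield_Fq q)"

end

theory Submission
  imports "HOL-Algebra.Algebraic_Closure_Type" "HOL-Number_Theory.Residues" Defs
begin

text \<open>
  Write \<open>conjugate w = w ^ 5 ^ 4\<close> for the conjugate of \<open>w\<close> over the subfield with \<open>5 ^ 4\<close>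
  elements. As \<open>\<delta>\<close> lies in the prime field, \<open>S(w) = w ^ 5 + \<delta> * conjugate w ^ 5\<close>, and
  \<open>S(w) = l * w\<close> together with its conjugate can be solved for \<open>w ^ 5\<close>: with \<open>p = l / 2\<close>,
  the Frobenius maps the pair \<open>(w, conjugate w)\<close> linearly, by a matrix depending on \<open>p\<close> only.
  Iterating, \<open>w ^ 25 = alpha p * w + beta p * conjugate w\<close>, and expanding
  \<open>conjugate w = (w ^ 25) ^ 25\<close> gives a linear relation between \<open>w\<close> and \<open>conjugate w\<close>
  whose \<open>w\<close>-coefficient is \<open>gamma p\<close>. Two solutions \<open>y, z\<close> of \<open>S(w) = l * w\<close> for which the pairs
  \<open>(y, conjugate y)\<close> and \<open>(z, conjugate z)\<close> are linearly independent force
  \<open>gamma p = gamma (conjugate p) = 0\<close>, which factorises into \<open>p = 0\<close>, impossible.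
  Otherwise \<open>y = t * z\<close> and \<open>conjugate y = t * conjugate z\<close>, and comparing
  \<open>y ^ 5\<close> with \<open>t * z ^ 5\<close> gives \<open>t ^ 5 = t\<close>.
\<close>

text \<open>
  The library's \<open>finite_field_power_card_eq_same\<close> needs the sort \<open>finite_field\<close>,
  hence the detour through the multiplicative group of HOL-Algebra.
\<close>
lemma field_power_card_eq_self:
  fixes x :: "'a::{field,finite}"
  shows "x ^ card (UNIV :: 'a set) = x"
proof (cases "x = 0")
  case True
  then show ?thesis by (simp add: finite_UNIV_card_ge_0)
next
  case False
  let ?R = "ring_of_type_algebra :: 'a ring"
  have pow: "x [^]\<^bsub>?R\<^esub> n = x ^ n" for n
    by (induction n) (simp_all add: ring_of_type_algebra_def)
  have "Coset.order (Multiplicative_Group.mult_of ?R) = card (UNIV :: 'a set) - 1"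
    by (simp add: Coset.order_def ring_of_type_algebra_def card_Diff_singleton)
  then have "x [^]\<^bsub>?R\<^esub> (card (UNIV :: 'a set) - 1) = 1"
    using group.pow_order_eq_1[OF field.field_mult_group[OF field_from_type_algebra], of x] False
    by (simp add: Multiplicative_Group.nat_pow_mult_of ring_of_type_algebra_def)
  then have "x ^ (card (UNIV :: 'a set) - 1) = 1"
    by (simp add: pow)
  moreover have "card (UNIV :: 'a set) = Suc (card (UNIV :: 'a set) - 1)"
    using finite_UNIV_card_ge_0[where 'a = 'a] by simp
  ultimately show ?thesis
    by (metis power_Suc2 mult_1_left)
qed

lemma CHAR_eq_of_card_eq_prime_power:
  assumes "prime p" and "card (UNIV :: 'a::{field,finite} set) = p ^ n"
  shows "CHAR('a) = p"
proof -
  have "prime CHAR('a)"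
    by (intro prime_CHAR_semidom finite_imp_CHAR_pos) simp
  moreover have "CHAR('a) dvd p ^ n"
    using CHAR_dvd_CARD assms(2) by metis
  ultimately show ?thesis
    using assms(1) by (metis prime_dvd_power primes_dvd_imp_eq)
qed

lemma square_eq_minus_one_of_order_four:
  fixes d :: "'a::field"
  assumes "d ^ 4 = 1" and "d \<noteq> 1" and "d \<noteq> -1"
  shows "d ^ 2 = -1"
proof -
  have "(d - 1) * (d + 1) * (d ^ 2 + 1) = 0"
    using assms(1) by (simp add: algebra_simps power2_eq_square power4_eq_xxxx)
  then show ?thesis
    using assms(2,3) by (simp add: eq_neg_iff_add_eq_0)
qed

lemma coeff_zero_of_independent:
  fixes e g y z Y Z :: "'a::field"
  assumes "e * y = g * Y" and "e * z = g * Z" and "y * Z \<noteq> z * Y"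
  shows "e = 0"
proof -
  have "e * (y * Z - z * Y) = 0"
    using assms(1,2) by (simp add: algebra_simps)
  then show ?thesis
    using assms(3) by simp
qed

lemma symmetric_products_cases:
  fixes P Q U V :: "'a::field"
  assumes "(2::'a) \<noteq> 0" and "P * U = Q * V" and "Q * U = P * V"
  shows "P = Q \<or> P = - Q \<or> U = 0 \<and> V = 0"
proof -
  have "(P - Q) * (U + V) = 0" and "(P + Q) * (U - V) = 0"
    using assms(2,3) by (simp_all add: algebra_simps)
  moreover have "U = 0 \<and> V = 0" if "U + V = 0" and "U - V = 0"
  proof -
    have "2 * U = (U + V) + (U - V)"
      by simp
    then have "U = 0"
      using that assms(1) by simp
    then show ?thesis
      using that by simp
  qed
  ultimately show ?thesis
    by (auto simp: eq_neg_iff_add_eq_0)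
qed

lemma power_power_eq_self: "a ^ n = a \<Longrightarrow> a ^ n ^ k = a" for a :: "'a::monoid_mult"
  by (induction k) (simp_all add: power_mult)

context
  assumes card_UNIV: "card (UNIV :: 'a::{field,finite} set) = 5 ^ 8"
begin

lemma CHAR_eq_5: "CHAR('a) = 5"
  by (rule CHAR_eq_of_card_eq_prime_power[OF _ card_UNIV]) simp

lemma frobenius_add: "(a + b) ^ 5 ^ k = a ^ 5 ^ k + b ^ 5 ^ k" for a b :: 'a
  by (rule freshmans_dream') (simp_all add: CHAR_eq_5)

lemma frobenius_minus: "(- a) ^ 5 ^ k = - (a ^ 5 ^ k)" for a :: 'a
  using frobenius_add[of a "- a" k] by (simp add: eq_neg_iff_add_eq_0)

lemma frobenius_diff: "(a - b) ^ 5 ^ k = a ^ 5 ^ k - b ^ 5 ^ k" for a b :: 'a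
  using frobenius_add[of a "- b" k] frobenius_minus[of b k] by simp

lemma power_card_eq_self: "a ^ 390625 = a" for a :: 'a
  using field_power_card_eq_self[of a] card_UNIV by simp

lemma power_25_inj: "a ^ 25 = b ^ 25 \<Longrightarrow> a = b" for a b :: 'a
proof -
  assume "a ^ 25 = b ^ 25"
  then have "(a ^ 25) ^ 15625 = (b ^ 25) ^ 15625"
    by simp
  then show "a = b"
    by (simp add: power_card_eq_self flip: power_mult)
qed

lemma two_nonzero: "(2::'a) \<noteq> 0"
  using of_nat_eq_0_iff_char_dvd[of 2, where 'a='a] by (simp add: CHAR_eq_5)

definition conjugate :: "'a \<Rightarrow> 'a" where
  "conjugate x = x ^ 625"

lemma conjugate_add: "conjugate (a + b) = conjugate a + conjugate b"
  using frobenius_add[of a b 4] by (simp add: conjugate_def)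

lemma conjugate_diff: "conjugate (a - b) = conjugate a - conjugate b"
  using frobenius_diff[of a b 4] by (simp add: conjugate_def)

lemma conjugate_minus: "conjugate (- a) = - conjugate a"
  using frobenius_minus[of a 4] by (simp add: conjugate_def)

lemma conjugate_mult: "conjugate (a * b) = conjugate a * conjugate b"
  by (simp add: conjugate_def power_mult_distrib)

lemma conjugate_power: "conjugate (a ^ n) = conjugate a ^ n"
  by (simp add: conjugate_def flip: power_mult) (simp add: mult.commute)

lemma conjugate_conjugate: "conjugate (conjugate a) = a"
  by (simp add: conjugate_def flip: power_mult) (rule power_card_eq_self)

lemma conjugate_two: "conjugate 2 = 2"
  using conjugate_add[of 1 1] by (simp add: conjugate_def[of 1])

lemma conjugate_eq_0_iff: "conjugate a = 0 \<longleftrightarrow> a = 0"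
  by (simp add: conjugate_def)

lemma power_3125_eq: "a ^ 3125 = conjugate a ^ 5"
  by (simp add: conjugate_def flip: power_mult)

context
  fixes \<delta> :: 'a
  assumes \<delta>_square: "\<delta> ^ 2 = -1"
begin

lemma \<delta>_power_5: "\<delta> ^ 5 = \<delta>"
proof -
  have "\<delta> ^ 5 = \<delta> * (\<delta> ^ 2) ^ 2"
    by (simp add: eval_nat_numeral)
  then show ?thesis
    using \<delta>_square by simp
qed

lemma \<delta>_mult_\<delta>: "\<delta> * (\<delta> * a) = - a"
  using \<delta>_square by (simp add: power2_eq_square flip: mult.assoc)

lemma conjugate_\<delta>: "conjugate \<delta> = \<delta>"
  using power_power_eq_self[OF \<delta>_power_5, of 4] by (simp add: conjugate_def)

lemmas conjugate_simps = conjugate_add conjugate_diff conjugate_minus conjugate_mult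
  conjugate_power conjugate_conjugate conjugate_\<delta> conjugate_two

definition frob_rel :: "'a \<Rightarrow> 'a \<Rightarrow> bool" where
  "frob_rel p w \<longleftrightarrow> w ^ 5 = p * w - \<delta> * conjugate p * conjugate w"

lemma frob_rel_conjugate: "frob_rel p w \<Longrightarrow> frob_rel (conjugate p) (conjugate w)"
  unfolding frob_rel_def by (drule arg_cong[where f = conjugate]) (simp add: conjugate_simps)

lemma frob_rel_of_eigenvector:
  assumes "w ^ 5 + \<delta> * w ^ 3125 = 2 * p * w"
  shows "frob_rel p w"
proof -
  have eq: "w ^ 5 + \<delta> * conjugate w ^ 5 = 2 * p * w"
    using assms by (simp add: power_3125_eq)
  have eq_conj: "conjugate w ^ 5 + \<delta> * w ^ 5 = 2 * conjugate p * conjugate w"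
    using arg_cong[where f = conjugate, OF eq] by (simp add: conjugate_simps)
  have "2 * w ^ 5 = (w ^ 5 + \<delta> * conjugate w ^ 5) - \<delta> * (conjugate w ^ 5 + \<delta> * w ^ 5)"
    by (simp add: algebra_simps \<delta>_mult_\<delta>)
  also have "\<dots> = 2 * (p * w - \<delta> * conjugate p * conjugate w)"
    unfolding eq eq_conj by (simp add: algebra_simps)
  finally show ?thesis
    unfolding frob_rel_def using two_nonzero mult_left_cancel by blast
qed

definition alpha :: "'a \<Rightarrow> 'a" where
  "alpha p = p * (p ^ 5 - conjugate p ^ 5)"

definition beta :: "'a \<Rightarrow> 'a" where
  "beta p = - \<delta> * conjugate p * (p ^ 5 + conjugate p ^ 5)"

definition gamma :: "'a \<Rightarrow> 'a" where
  "gamma p = alpha p ^ 25 * alpha p + beta p ^ 25 * beta (conjugate p)"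

lemma frob_rel_power_25:
  assumes "frob_rel p w"
  shows "w ^ 25 = alpha p * w + beta p * conjugate w"
proof -
  have w5: "w ^ 5 = p * w - \<delta> * conjugate p * conjugate w"
    using assms unfolding frob_rel_def .
  have w5_conj: "conjugate w ^ 5 = conjugate p * conjugate w - \<delta> * p * w"
    using frob_rel_conjugate[OF assms] unfolding frob_rel_def conjugate_conjugate .
  have "w ^ 25 = (w ^ 5) ^ 5"
    by (simp flip: power_mult)
  also have "\<dots> = p ^ 5 * w ^ 5 - \<delta> * conjugate p ^ 5 * conjugate w ^ 5"
    using frobenius_diff[of _ _ 1] \<delta>_power_5 by (simp add: w5 power_mult_distrib)
  also have "\<dots> = alpha p * w + beta p * conjugate w"
    unfolding w5 w5_conj alpha_def beta_def by (simp add: algebra_simps \<delta>_mult_\<delta>)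
  finally show ?thesis .
qed

lemma frob_rel_power_625:
  assumes "frob_rel p w"
  shows "gamma p * w
    = (1 - alpha p ^ 25 * beta p - beta p ^ 25 * alpha (conjugate p)) * conjugate w"
proof -
  have w25: "w ^ 25 = alpha p * w + beta p * conjugate w"
    using frob_rel_power_25[OF assms] .
  have w25_conj: "conjugate w ^ 25 = alpha (conjugate p) * conjugate w + beta (conjugate p) * w"
    using frob_rel_power_25[OF frob_rel_conjugate[OF assms]] unfolding conjugate_conjugate .
  have "conjugate w = (w ^ 25) ^ 25"
    by (simp add: conjugate_def flip: power_mult)
  also have "\<dots> = alpha p ^ 25 * w ^ 25 + beta p ^ 25 * conjugate w ^ 25"
    using frobenius_add[of _ _ 2] by (simp add: w25 power_mult_distrib)
  finally show ?thesis
    unfolding w25 w25_conj gamma_def by (simp add: algebra_simps)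
qed

lemma gamma_eq:
  "gamma p = p * (p ^ 25 * (p ^ 5 - conjugate p ^ 5) ^ 26
                  - conjugate p ^ 25 * (p ^ 5 + conjugate p ^ 5) ^ 26)"
proof -
  define a where "a = p ^ 5 - conjugate p ^ 5"
  define b where "b = p ^ 5 + conjugate p ^ 5"
  have "(- \<delta>) ^ 25 = - \<delta>"
    using power_power_eq_self[OF \<delta>_power_5, of 2] by simp
  then have minus_\<delta>: "(- \<delta> * u) ^ 25 * (- \<delta> * v) = - (u ^ 25 * v)" for u v
    by (simp add: power_mult_distrib algebra_simps \<delta>_mult_\<delta>)
  have "beta p = - \<delta> * (conjugate p * b)" and "beta (conjugate p) = - \<delta> * (p * b)"
    unfolding beta_def conjugate_conjugate b_def by (simp_all add: add.commute mult.assoc)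
  then have "beta p ^ 25 * beta (conjugate p) = - ((conjugate p * b) ^ 25 * (p * b))"
    by (simp only: minus_\<delta>)
  moreover have "alpha p = p * a"
    unfolding alpha_def a_def ..
  ultimately have "gamma p = (p * a) ^ 25 * (p * a) - (conjugate p * b) ^ 25 * (p * b)"
    unfolding gamma_def by simp
  also have "\<dots> = p * (p ^ 25 * (a ^ 25 * a) - conjugate p ^ 25 * (b ^ 25 * b))"
    by (simp add: power_mult_distrib algebra_simps)
  also have "\<dots> = p * (p ^ 25 * a ^ 26 - conjugate p ^ 25 * b ^ 26)"
    by (simp flip: power_Suc2)
  finally show ?thesis
    unfolding a_def b_def .
qed

lemma gamma_conjugate_eq_zero:
  assumes "gamma p = 0" and "gamma (conjugate p) = 0"
  shows "p = 0"
proof (rule ccontr)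
  assume "p \<noteq> 0"
  then have p_conj: "conjugate p \<noteq> 0"
    by (simp add: conjugate_eq_0_iff)
  define a where "a = p ^ 5 - conjugate p ^ 5"
  define b where "b = p ^ 5 + conjugate p ^ 5"
  have "p ^ 25 * a ^ 26 = conjugate p ^ 25 * b ^ 26"
    using assms(1) \<open>p \<noteq> 0\<close> unfolding gamma_eq a_def b_def by simp
  moreover have "conjugate p ^ 25 * a ^ 26 = p ^ 25 * b ^ 26"
  proof -
    have "conjugate p ^ 5 - p ^ 5 = - a"
      unfolding a_def by simp
    then have "(conjugate p ^ 5 - p ^ 5) ^ 26 = a ^ 26"
      by simp
    then show ?thesis
      using assms(2) p_conj unfolding gamma_eq a_def b_def conjugate_conjugate
      by (simp add: add.commute)
  qed
  ultimately have "p ^ 25 = conjugate p ^ 25 \<or> p ^ 25 = - (conjugate p ^ 25) \<or> a ^ 26 = 0 \<and> b ^ 26 = 0"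
    by (rule symmetric_products_cases[OF two_nonzero])
  then have "a = 0 \<or> b = 0"
  proof (elim disjE)
    assume "p ^ 25 = conjugate p ^ 25"
    then have "p = conjugate p"
      by (rule power_25_inj)
    then have "p ^ 5 = conjugate p ^ 5"
      by (rule arg_cong)
    then show ?thesis
      unfolding a_def by simp
  next
    assume "p ^ 25 = - (conjugate p ^ 25)"
    then have "p ^ 25 = (- conjugate p) ^ 25"
      by simp
    then have "p = - conjugate p"
      by (rule power_25_inj)
    then have "p ^ 5 = (- conjugate p) ^ 5"
      by (rule arg_cong)
    then show ?thesis
      unfolding b_def by simp
  qed simp
  then have "a = 0 \<and> b = 0"
    using \<open>p ^ 25 * a ^ 26 = conjugate p ^ 25 * b ^ 26\<close> \<open>p \<noteq> 0\<close> p_conj by auto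
  moreover have "2 * p ^ 5 = a + b"
    unfolding a_def b_def by simp
  ultimately have "2 * p ^ 5 = 0"
    by simp
  then show False
    using two_nonzero \<open>p \<noteq> 0\<close> by simp
qed

lemma frob_rel_dependent_ratio_fixed:
  assumes "frob_rel p y" and "frob_rel p z" and "z \<noteq> 0"
    and "y * conjugate z = z * conjugate y"
  shows "(y / z) ^ 5 = y / z"
proof -
  define t where "t = y / z"
  have y: "y = t * z" and y_conj: "conjugate y = t * conjugate z"
    using assms(3,4) unfolding t_def by (simp_all add: field_simps)
  have "t ^ 5 * z ^ 5 = y ^ 5"
    by (simp add: y power_mult_distrib)
  also have "\<dots> = t * (p * z - \<delta> * conjugate p * conjugate z)"
    using assms(1) unfolding frob_rel_def y_conj by (simp add: y algebra_simps)
  also have "\<dots> = t * z ^ 5"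
    using assms(2) unfolding frob_rel_def by simp
  finally have "t ^ 5 = t"
    using assms(3) by simp
  then show ?thesis
    unfolding t_def .
qed

lemma frob_rel_ratio_fixed:
  assumes y: "frob_rel p y" "y \<noteq> 0" and z: "frob_rel p z" "z \<noteq> 0"
  shows "(y / z) ^ 5 = y / z"
proof (cases "y * conjugate z = z * conjugate y")
  case True
  then show ?thesis
    using frob_rel_dependent_ratio_fixed y z by blast
next
  case False
  have "gamma p = 0"
    using frob_rel_power_625[OF y(1)] frob_rel_power_625[OF z(1)] False
    by (rule coeff_zero_of_independent)
  moreover have "gamma (conjugate p) = 0"
  proof -
    define g where "g = 1 - alpha (conjugate p) ^ 25 * beta (conjugate p)
                          - beta (conjugate p) ^ 25 * alpha p"
    have "gamma (conjugate p) * conjugate w = g * w" if "frob_rel p w" for w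
      using frob_rel_power_625[OF frob_rel_conjugate[OF that]]
      unfolding g_def conjugate_conjugate .
    moreover have "conjugate y * z \<noteq> conjugate z * y"
      using False by (simp add: mult.commute)
    ultimately show ?thesis
      using coeff_zero_of_independent y(1) z(1) by blast
  qed
  ultimately have "p = 0"
    by (rule gamma_conjugate_eq_zero)
  then show ?thesis
    using y unfolding frob_rel_def by (simp add: conjugate_def)
qed

lemma same_eigenvalue_ratio_fixed:
  assumes "y \<noteq> 0" and "z \<noteq> 0"
    and "(y ^ 5 + \<delta> * y ^ 3125) / y = (z ^ 5 + \<delta> * z ^ 3125) / z"
  shows "(y / z) ^ 5 = y / z"
proof -
  define l where "l = (y ^ 5 + \<delta> * y ^ 3125) / y"
  have "y ^ 5 + \<delta> * y ^ 3125 = 2 * (l / 2) * y"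
    using assms(1) two_nonzero unfolding l_def by simp
  moreover have "z ^ 5 + \<delta> * z ^ 3125 = 2 * (l / 2) * z"
    using assms(2,3) two_nonzero unfolding l_def by simp
  ultimately show ?thesis
    using frob_rel_ratio_fixed frob_rel_of_eigenvector assms(1,2) by blast
qed

end

end

theorem mainTheorem12:
  fixes \<delta> :: "'a::{field,finite}"
  assumes "card (UNIV :: 'a set) = 5 ^ 8"
    and "\<delta> \<noteq> 0" and "\<delta> \<noteq> 1" and "\<delta> \<noteq> -1"
    and "\<delta> ^ 4 = 1"
  shows "scattered 5 0 (monom 1 5 + monom \<delta> (5 ^ 5))"
proof -
  have \<delta>_square: "\<delta> ^ 2 = -1"
    using assms(5,3,4) by (rule square_eq_minus_one_of_order_four)
  have "linearized 5 (monom 1 5 + monom \<delta> (5 ^ 5))"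
  proof (unfold linearized_def, intro allI impI)
    fix k
    assume "coeff (monom 1 5 + monom \<delta> (5 ^ 5)) k \<noteq> 0"
    then have "k = 5 ^ 1 \<or> k = 5 ^ 5"
      by (auto simp: coeff_monom split: if_splits)
    then show "\<exists>i. k = 5 ^ i"
      by blast
  qed
  moreover have "poly (monom 1 5 + monom \<delta> (5 ^ 5)) x = x ^ 5 + \<delta> * x ^ 3125" for x
    by (simp add: poly_monom)
  ultimately show ?thesis
    unfolding scattered_def subfield_Fq_def
    using same_eigenvalue_ratio_fixed[OF assms(1) \<delta>_square] by simp
qed

end
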